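(* For every integer $n\ge1$ and every $u\in V$, $\Pr(E_{1u})<\dfrac{3}{\ln(n+1)}$.
   Context: For an integer $n\ge1$, the $n$-octahedral graph $G'_n=(V,E')$ is the undirected graph with vertex set $V=\{u\in\mathbb{Z}^3:|u_1|+|u_2|+|u_3|=n\}$ and edge set $E'=\{\{v,w\}\subset V: v\neq w,\ |v_i-w_i|\le 1 \text{ for all } i=1,2,3\}$. For $u,v\in V$, $d_{uv}$ denotes the shortest-path distance in $G'_n$, and $Z_u=\left(\sum_{w\in V\setminus\{u\}} d_{uw}^{-2}\right)^{-1}$. The OSW random graph $G_n=(V,E)$ is the directed graph in which, for every $\{u,v\}\in E'$, both $(u,v),(v,u)\in E$, and in addition each vertex $u\in V$, independently of the others, chooses one vertex $v\in V\setminus\{u\}$ with probability $Z_u d_{uv}^{-2}$ and the long-range edge $(u,v)$ is added; $C_{uv}$ denotes the event that $u$ chooses $v$. For an ordered pair $(x,y)$ of distinct vertices, say $(x,y)$ is of type $s$ if $\{x,y\}\in E'$, and of type $w$ if $d_{xy}\ge2$ and $C_{xy}$ occurs. A C3 rooted at $u$ of type $(t_1,t_2,t_3)\in\{s,w\}^3$ is a triple $(u,a,b)$ of pairwise distinct vertices such that $(u,a)$ is of type $t_1$, $(a,b)$ is of type $t_2$ and $(b,u)$ is of type $t_3$. $E_{1u}$ is the event that there exists a C3 rooted at $u$ of type $(s,s,w)$. *)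

theory Defs
  imports "HOL-Probability.Probability"
begin

type_synonym vtx = "int \<times> int \<times> int"

definition octV :: "nat \<Rightarrow> vtx set" where
  "octV n = {(x,y,z). \<bar>x\<bar> + \<bar>y\<bar> + \<bar>z\<bar> = int n}"

definition octAdj :: "nat \<Rightarrow> vtx \<Rightarrow> vtx \<Rightarrow> bool" where
  "octAdj n v w \<longleftrightarrow> v \<in> octV n \<and> w \<in> octV n \<and> v \<noteq> w \<and>
     \<bar>fst v - fst w\<bar> \<le> 1 \<and> \<bar>fst (snd v) - fst (snd w)\<bar> \<le> 1 \<and>
     \<bar>snd (snd v) - snd (snd w)\<bar> \<le> 1"

definition octRel :: "nat \<Rightarrow> vtx rel" where
  "octRel n = {(v,w). octAdj n v w}"

definition octDist :: "nat \<Rightarrow> vtx \<Rightarrow> vtx \<Rightarrow> nat" where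
  "octDist n u v = (LEAST k. (u,v) \<in> octRel n ^^ k)"

definition octZ :: "nat \<Rightarrow> vtx \<Rightarrow> real" where
  "octZ n u = inverse (\<Sum>w\<in>octV n - {u}. 1 / (real (octDist n u w))^2)"

definition choice_pmf :: "nat \<Rightarrow> vtx \<Rightarrow> vtx pmf" where
  "choice_pmf n u = embed_pmf (\<lambda>v. if v \<in> octV n \<and> v \<noteq> u
       then octZ n u / (real (octDist n u v))^2 else 0)"

text \<open>Joint distribution of all choices (independent); f u is the vertex chosen by u.
  Outside the vertex set the value is an irrelevant default.\<close>
definition osw_pmf :: "nat \<Rightarrow> (vtx \<Rightarrow> vtx) pmf" where
  "osw_pmf n = Pi_pmf (octV n) (0,0,0) (choice_pmf n)"

definition type_w :: "nat \<Rightarrow> (vtx \<Rightarrow> vtx) \<Rightarrow> vtx \<Rightarrow> vtx \<Rightarrow> bool" where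
  "type_w n f x y \<longleftrightarrow> x \<in> octV n \<and> y \<in> octV n \<and> x \<noteq> y \<and> octDist n x y \<ge> 2 \<and> f x = y"

text \<open>Event E_{1u}: existence of a C3 rooted at u of type (s,s,w).\<close>
definition E1 :: "nat \<Rightarrow> vtx \<Rightarrow> (vtx \<Rightarrow> vtx) set" where
  "E1 n u = {f. \<exists>a b. a \<in> octV n \<and> b \<in> octV n \<and> u \<noteq> a \<and> u \<noteq> b \<and> a \<noteq> b \<and>
      octAdj n u a \<and> octAdj n a b \<and> type_w n f b u}"

end

theory Submission
  imports Defs
begin

text \<open>
  If \<open>E\<^sub>1\<^sub>u\<close> occurs, some vertex \<open>b\<close> two short-range steps away from \<open>u\<close>, with
  \<open>d(b,u) \<ge> 2\<close>, chooses \<open>u\<close>. For \<open>n \<ge> 7\<close> some coordinate of \<open>u\<close> has absolute value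
  at least 3, so such a \<open>b\<close> is determined by its other two coordinates and there are at most
  24 of them. Each chooses \<open>u\<close> with probability \<open>Z\<^sub>b / d(b,u)\<^sup>2 \<le> Z\<^sub>b / 4\<close>, and
  \<open>Z\<^sub>b\<^sup>-\<^sup>1 > 2 ln (n + 1)\<close>: up to symmetry \<open>b = (x,y,z)\<close> with \<open>x\<close> maximal and all
  coordinates non-negative, and explicit lattice walks exhibit enough vertices close to \<open>b\<close> to give
  \<open>Z\<^sub>b\<^sup>-\<^sup>1 \<ge> H\<^sub>x + H\<^sub>y + H\<^sub>x\<^sub>+\<^sub>z + 5/4\<close>, while
  \<open>(n + 1)\<^sup>2 \<le> 3 (x + 1) (y + 1) (x + z + 1)\<close> and \<open>ln 3 < 5/4\<close>. The union bound gives
  \<open>24 / (8 ln (n + 1)) = 3 / ln (n + 1)\<close>; for \<open>n \<le> 6\<close> the bound exceeds 1.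
\<close>

lemma finite_octV: "finite (octV n)"
proof -
  have "octV n \<subseteq> {-int n..int n} \<times> {-int n..int n} \<times> {-int n..int n}"
    by (auto simp: octV_def)
  then show ?thesis
    by (rule finite_subset) auto
qed

lemma octDist_le: "(v, w) \<in> octRel n ^^ k \<Longrightarrow> octDist n v w \<le> k"
  unfolding octDist_def by (rule Least_le)

lemma octDist_pos:
  assumes "(v, w) \<in> octRel n ^^ k" and "v \<noteq> w"
  shows "octDist n v w \<ge> 1"
proof -
  have "(v, w) \<in> octRel n ^^ octDist n v w"
    unfolding octDist_def by (rule LeastI) (rule assms(1))
  with assms(2) show ?thesis
    by (cases "octDist n v w") auto
qed

lemma octDist_refl: "octDist n v v = 0"
  unfolding octDist_def by simp

definition ray :: "vtx \<Rightarrow> vtx \<Rightarrow> nat \<Rightarrow> vtx" where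
  "ray p s k = (fst p + int k * fst s, fst (snd p) + int k * fst (snd s),
                snd (snd p) + int k * snd (snd s))"

lemma relpow_ray:
  assumes "s \<noteq> (0, 0, 0)" "\<bar>fst s\<bar> \<le> 1" "\<bar>fst (snd s)\<bar> \<le> 1" "\<bar>snd (snd s)\<bar> \<le> 1"
    and "\<And>i. i \<le> k \<Longrightarrow> ray p s i \<in> octV n"
  shows "(p, ray p s k) \<in> octRel n ^^ k"
  using assms(5)
proof (induction k)
  case 0
  then show ?case by (simp add: ray_def)
next
  case (Suc k)
  have "ray p s k \<in> octV n" "ray p s (Suc k) \<in> octV n"
    using Suc.prems by auto
  then have "octAdj n (ray p s k) (ray p s (Suc k))"
    using assms(1-4) by (cases s) (auto simp: octAdj_def ray_def algebra_simps)
  with Suc show ?case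
    by (auto simp: octRel_def)
qed

lemma relpow_shift_first:
  assumes "x + y + z = n" "a \<le> j" "j \<le> x"
  shows "((int x, int y, int z), (int x - int j, int y + int a, int z + (int j - int a)))
           \<in> octRel n ^^ j"
proof -
  define p where "p = (int x, int y, int z)"
  define q where "q = ray p (-1, 1, 0) a"
  have "(p, q) \<in> octRel n ^^ a"
    unfolding q_def by (rule relpow_ray) (use assms in \<open>auto simp: ray_def p_def octV_def\<close>)
  moreover have "(q, ray q (-1, 0, 1) (j - a)) \<in> octRel n ^^ (j - a)"
    by (rule relpow_ray) (use assms in \<open>auto simp: ray_def p_def q_def octV_def\<close>)
  ultimately have "(p, ray q (-1, 0, 1) (j - a)) \<in> octRel n ^^ (a + (j - a))"
    by (auto simp: relpow_add)
  then show ?thesis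
    using assms by (simp add: ray_def p_def q_def)
qed

definition oct_involution :: "(vtx \<Rightarrow> vtx) \<Rightarrow> bool" where
  "oct_involution \<sigma> \<longleftrightarrow> (\<forall>v. \<sigma> (\<sigma> v) = v) \<and> (\<forall>n v. \<sigma> v \<in> octV n \<longleftrightarrow> v \<in> octV n) \<and>
     (\<forall>n v w. octAdj n (\<sigma> v) (\<sigma> w) \<longleftrightarrow> octAdj n v w)"

lemma oct_involutionD:
  assumes "oct_involution \<sigma>"
  shows "\<sigma> (\<sigma> v) = v" "\<sigma> v \<in> octV n \<longleftrightarrow> v \<in> octV n"
    "octAdj n (\<sigma> v) (\<sigma> w) \<longleftrightarrow> octAdj n v w"
  using assms unfolding oct_involution_def by blast+

lemma oct_involutions:
  "oct_involution (\<lambda>(a, b, c). (-a, b, c))" "oct_involution (\<lambda>(a, b, c). (a, -b, c))"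
  "oct_involution (\<lambda>(a, b, c). (a, b, -c))" "oct_involution (\<lambda>(a, b, c). (b, a, c))"
  "oct_involution (\<lambda>(a, b, c). (c, b, a))"
  unfolding oct_involution_def
  by (simp_all add: split_paired_all octV_def octAdj_def abs_minus_commute add_ac; blast)+

lemma oct_involution_relpow:
  assumes "oct_involution \<sigma>"
  shows "(\<sigma> v, \<sigma> w) \<in> octRel n ^^ k \<longleftrightarrow> (v, w) \<in> octRel n ^^ k"
proof (induction k arbitrary: w)
  case 0
  then show ?case
    using oct_involutionD(1)[OF assms] by (metis relpow_0_I relpow_0_E)
next
  case (Suc k)
  have "(\<sigma> v, \<sigma> w) \<in> octRel n ^^ Suc k \<longleftrightarrow> (\<exists>m. (\<sigma> v, m) \<in> octRel n ^^ k \<and> octAdj n m (\<sigma> w))"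
    by (simp add: octRel_def relcomp_unfold)
  also have "\<dots> \<longleftrightarrow> (\<exists>m. (\<sigma> v, \<sigma> m) \<in> octRel n ^^ k \<and> octAdj n (\<sigma> m) (\<sigma> w))"
    by (metis oct_involutionD(1)[OF assms])
  also have "\<dots> \<longleftrightarrow> (v, w) \<in> octRel n ^^ Suc k"
    using Suc oct_involutionD(3)[OF assms] by (simp add: octRel_def relcomp_unfold)
  finally show ?case .
qed

lemma oct_involution_octDist:
  "oct_involution \<sigma> \<Longrightarrow> octDist n (\<sigma> v) (\<sigma> w) = octDist n v w"
  unfolding octDist_def by (simp add: oct_involution_relpow)

lemma oct_involution_relpowI:
  "oct_involution \<sigma> \<Longrightarrow> (v, w) \<in> octRel n ^^ k \<Longrightarrow> (\<sigma> v, \<sigma> w) \<in> octRel n ^^ k"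
  by (simp add: oct_involution_relpow)

definition inv_sq_dist_sum :: "nat \<Rightarrow> vtx \<Rightarrow> real" where
  "inv_sq_dist_sum n b = (\<Sum>w\<in>octV n - {b}. 1 / (real (octDist n b w))^2)"

lemma oct_involution_inv_sq_dist_sum:
  assumes "oct_involution \<sigma>"
  shows "inv_sq_dist_sum n (\<sigma> b) = inv_sq_dist_sum n b"
proof -
  note inv = oct_involutionD(1)[OF assms] and V = oct_involutionD(2)[OF assms]
  then have inj: "\<And>v w. \<sigma> v = \<sigma> w \<longleftrightarrow> v = w"
    by metis
  have dist: "\<And>v w. octDist n v (\<sigma> w) = octDist n (\<sigma> v) w"
    by (metis inv oct_involution_octDist[OF assms])
  show ?thesis
    unfolding inv_sq_dist_sum_def
    by (rule sum.reindex_bij_witness[where i = \<sigma> and j = \<sigma>]) (auto simp: inv V inj dist)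
qed

lemma inv_sq_dist_sum_symmetric:
  "inv_sq_dist_sum n (b, a, c) = inv_sq_dist_sum n (a, b, c)"
  "inv_sq_dist_sum n (c, b, a) = inv_sq_dist_sum n (a, b, c)"
  "inv_sq_dist_sum n (\<bar>a\<bar>, \<bar>b\<bar>, \<bar>c\<bar>) = inv_sq_dist_sum n (a, b, c)"
proof -
  note flip = oct_involution_inv_sq_dist_sum[OF oct_involutions(1)]
    oct_involution_inv_sq_dist_sum[OF oct_involutions(2)]
    oct_involution_inv_sq_dist_sum[OF oct_involutions(3)]
  show "inv_sq_dist_sum n (b, a, c) = inv_sq_dist_sum n (a, b, c)"
    using oct_involution_inv_sq_dist_sum[OF oct_involutions(4)] by fastforce
  show "inv_sq_dist_sum n (c, b, a) = inv_sq_dist_sum n (a, b, c)"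
    using oct_involution_inv_sq_dist_sum[OF oct_involutions(5)] by fastforce
  have "inv_sq_dist_sum n (\<bar>a\<bar>, b', c') = inv_sq_dist_sum n (a, b', c')" for b' c'
    using flip(1)[of n "(a, b', c')"] by (cases "a \<ge> 0") auto
  moreover have "inv_sq_dist_sum n (a', \<bar>b\<bar>, c') = inv_sq_dist_sum n (a', b, c')" for a' c'
    using flip(2)[of n "(a', b, c')"] by (cases "b \<ge> 0") auto
  moreover have "inv_sq_dist_sum n (a', b', \<bar>c\<bar>) = inv_sq_dist_sum n (a', b', c)" for a' b'
    using flip(3)[of n "(a', b', c)"] by (cases "c \<ge> 0") auto
  ultimately show "inv_sq_dist_sum n (\<bar>a\<bar>, \<bar>b\<bar>, \<bar>c\<bar>) = inv_sq_dist_sum n (a, b, c)"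
    by simp
qed

lemma relpow_shift_second:
  assumes "x + y + z = n" "a \<le> j" "j \<le> y"
  shows "((int x, int y, int z), (int x + int a, int y - int j, int z + (int j - int a)))
           \<in> octRel n ^^ j"
proof -
  have "((int y, int x, int z), (int y - int j, int x + int a, int z + (int j - int a)))
          \<in> octRel n ^^ j"
    by (rule relpow_shift_first) (use assms in auto)
  from oct_involution_relpowI[OF oct_involutions(4) this] show ?thesis
    by simp
qed

lemma relpow_shift_third:
  assumes "x + y + z = n" "a \<le> j" "j \<le> z"
  shows "((int x, int y, int z), (int x + (int j - int a), int y + int a, int z - int j))
           \<in> octRel n ^^ j"
proof -
  have "((int z, int y, int x), (int z - int j, int y + int a, int x + (int j - int a)))
          \<in> octRel n ^^ j"
    by (rule relpow_shift_first) (use assms in auto)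
  from oct_involution_relpowI[OF oct_involutions(5) this] show ?thesis
    by simp
qed

lemma relpow_shift_across:
  assumes "x + y + z = n" "a \<le> j" "j \<le> x"
  shows "((int x, int y, int z), (int x - int j, int y + int z + int a, - (int j - int a)))
           \<in> octRel n ^^ (z + j)"
proof -
  define p where "p = (int x, int y, int z)"
  have "(p, ray p (0, 1, -1) z) \<in> octRel n ^^ z"
    by (rule relpow_ray) (use assms in \<open>auto simp: ray_def p_def octV_def\<close>)
  moreover have "ray p (0, 1, -1) z = (int x, int (y + z), 0)"
    by (simp add: ray_def p_def)
  moreover have "((int x, int (y + z), 0), (int x - int j, int y + int z + int a, - (int j - int a)))
                   \<in> octRel n ^^ j"
  proof -
    have "((int x, int (y + z), 0), (int x - int j, int (y + z) + int a, 0 + (int j - int a)))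
            \<in> octRel n ^^ j"
      using relpow_shift_first[of x "y + z" 0 n a j] assms by simp
    from oct_involution_relpowI[OF oct_involutions(3) this] show ?thesis
      by simp
  qed
  ultimately show ?thesis
    unfolding p_def by (auto simp: relpow_add)
qed

lemma inv_sq_dist_sum_image_ge:
  assumes fin: "finite J" "\<And>j. j \<in> J \<Longrightarrow> finite (A j)"
    and inj: "inj_on g (Sigma J A)" and sub: "g ` Sigma J A \<subseteq> octV n - {b}"
    and walk: "\<And>j a. j \<in> J \<Longrightarrow> a \<in> A j \<Longrightarrow> (b, g (j, a)) \<in> octRel n ^^ h j"
  shows "(\<Sum>j\<in>J. real (card (A j)) / (real (h j))^2)
           \<le> (\<Sum>w\<in>g ` Sigma J A. 1 / (real (octDist n b w))^2)"
proof -
  have "(\<Sum>j\<in>J. real (card (A j)) / (real (h j))^2) = (\<Sum>(j, a)\<in>Sigma J A. 1 / (real (h j))^2)"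
    using fin by (simp add: sum.Sigma[symmetric])
  also have "\<dots> \<le> (\<Sum>(j, a)\<in>Sigma J A. 1 / (real (octDist n b (g (j, a))))^2)"
  proof (rule sum_mono, clarify)
    fix j a assume ja: "j \<in> J" "a \<in> A j"
    then have "b \<noteq> g (j, a)"
      using sub by auto
    then have "1 \<le> octDist n b (g (j, a))" "octDist n b (g (j, a)) \<le> h j"
      using octDist_pos[OF walk[OF ja]] octDist_le[OF walk[OF ja]] by auto
    then show "1 / (real (h j))^2 \<le> 1 / (real (octDist n b (g (j, a))))^2"
      by (simp add: frac_le power_mono)
  qed
  also have "\<dots> = (\<Sum>w\<in>g ` Sigma J A. 1 / (real (octDist n b w))^2)"
    using inj by (simp add: sum.reindex split_def)
  finally show ?thesis .
qed

text \<open>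
  Within distance \<open>j\<close> of \<open>(x,y,z)\<close> lie the \<open>j + 1\<close> vertices obtained by moving \<open>j\<close> units out of
  one coordinate into the other two, and, within distance \<open>z + j\<close>, the \<open>j\<close> vertices reached by first
  walking to the plane \<open>z = 0\<close> and then moving \<open>j\<close> units out of the first coordinate, at least one
  of them into the third coordinate, which thus becomes negative.
\<close>

lemma inv_sq_dist_sum_ge_four_families:
  assumes "x + y + z = n"
  shows "inv_sq_dist_sum n (int x, int y, int z) \<ge>
     (\<Sum>j=1..x. (1 + real j) / (real j)^2) + (\<Sum>j=1..y. (1 + real j) / (real j)^2)
   + (\<Sum>j=1..z. (1 + real j) / (real j)^2) + (\<Sum>j=1..x. real j / (real z + real j)^2)"
proof -
  define b where "b = (int x, int y, int z)"
  define g1 where "g1 = (\<lambda>(j, a). (int x - int j, int y + int a, int z + (int j - int a)))"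
  define g2 where "g2 = (\<lambda>(j, a). (int x + int a, int y - int j, int z + (int j - int a)))"
  define g3 where "g3 = (\<lambda>(j, a). (int x + (int j - int a), int y + int a, int z - int j))"
  define g4 where "g4 = (\<lambda>(j, a). (int x - int j, int y + int z + int a, - (int j - int a)))"
  define F1 where "F1 = g1 ` Sigma {1..x} (\<lambda>j. {0..j})"
  define F2 where "F2 = g2 ` Sigma {1..y} (\<lambda>j. {0..j})"
  define F3 where "F3 = g3 ` Sigma {1..z} (\<lambda>j. {0..j})"
  define F4 where "F4 = g4 ` Sigma {1..x} (\<lambda>j. {0..<j})"
  let ?f = "\<lambda>w. 1 / (real (octDist n b w))^2"
  have F_sub: "F1 \<subseteq> octV n - {b}" "F2 \<subseteq> octV n - {b}" "F3 \<subseteq> octV n - {b}" "F4 \<subseteq> octV n - {b}"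
    using assms by (auto simp: F1_def F2_def F3_def F4_def g1_def g2_def g3_def g4_def b_def octV_def)
  have "(\<Sum>j=1..x. (1 + real j) / (real j)^2) \<le> sum ?f F1"
    unfolding F1_def
    by (rule order_trans[OF _ inv_sq_dist_sum_image_ge[where h = id]])
      (use assms F_sub(1) relpow_shift_first in \<open>auto simp: F1_def g1_def b_def inj_on_def\<close>)
  moreover have "(\<Sum>j=1..y. (1 + real j) / (real j)^2) \<le> sum ?f F2"
    unfolding F2_def
    by (rule order_trans[OF _ inv_sq_dist_sum_image_ge[where h = id]])
      (use assms F_sub(2) relpow_shift_second in \<open>auto simp: F2_def g2_def b_def inj_on_def\<close>)
  moreover have "(\<Sum>j=1..z. (1 + real j) / (real j)^2) \<le> sum ?f F3"
    unfolding F3_def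
    by (rule order_trans[OF _ inv_sq_dist_sum_image_ge[where h = id]])
      (use assms F_sub(3) relpow_shift_third in \<open>auto simp: F3_def g3_def b_def inj_on_def\<close>)
  moreover have "(\<Sum>j=1..x. real j / (real z + real j)^2) \<le> sum ?f F4"
    unfolding F4_def
    by (rule order_trans[OF _ inv_sq_dist_sum_image_ge[where h = "\<lambda>j. z + j"]])
      (use assms F_sub(4) relpow_shift_across in \<open>auto simp: F4_def g4_def b_def inj_on_def\<close>)
  moreover have "sum ?f (F1 \<union> F2 \<union> F3 \<union> F4) = sum ?f F1 + sum ?f F2 + sum ?f F3 + sum ?f F4"
    by (subst sum.union_disjoint; (simp add: F1_def F2_def F3_def F4_def)?;
        auto simp: g1_def g2_def g3_def g4_def)+
  moreover have "sum ?f (F1 \<union> F2 \<union> F3 \<union> F4) \<le> inv_sq_dist_sum n b"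
    unfolding inv_sq_dist_sum_def using F_sub by (intro sum_mono2) (auto simp: finite_octV)
  ultimately show ?thesis
    unfolding b_def by linarith
qed

lemma sum_succ_over_square:
  "(\<Sum>j=1..m. (1 + real j) / (real j)^2) = harm m + (\<Sum>j=1..m. 1 / (real j)^2)"
  unfolding harm_def
  by (subst sum.distrib[symmetric]) (intro sum.cong, auto simp: field_simps power2_eq_square)

lemma harm_shift_le:
  assumes "z \<ge> 1"
  shows "harm (z + x) - harm z - real x / (real z + real x) \<le> (\<Sum>j=1..x. real j / (real z + real j)^2)"
proof (induction x)
  case 0
  then show ?case by simp
next
  case (Suc x)
  define s where "s = real z + real x"
  have "s \<ge> 1"
    using assms by (simp add: s_def)
  have "real x / s - real x / (s + 1) = real x / (s * (s + 1))"
    using \<open>s \<ge> 1\<close> by (simp add: field_simps)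
  also have "\<dots> \<le> (real x + 1) / (s + 1)^2"
    using \<open>s \<ge> 1\<close> by (simp add: divide_simps power2_eq_square) (simp add: algebra_simps s_def)
  moreover have "1 / (s + 1) - (real x + 1) / (s + 1) = - (real x / (s + 1))"
    using \<open>s \<ge> 1\<close> by (simp add: field_simps)
  ultimately have "real x / s + 1 / (s + 1) - (real x + 1) / (s + 1) \<le> (real x + 1) / (s + 1)^2"
    by linarith
  moreover have "harm (z + Suc x) = harm (z + x) + 1 / (s + 1)"
    by (simp add: harm_Suc s_def add_ac divide_inverse)
  ultimately show ?case
    using Suc.IH by (simp add: s_def add_ac)
qed

lemma harm_le_two_families:
  "harm (z + x) \<le> (\<Sum>j=1..z. (1 + real j) / (real j)^2) + (\<Sum>j=1..x. real j / (real z + real j)^2)"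
proof (cases "z = 0")
  case True
  have "(\<Sum>j=1..x. real j / (real z + real j)^2) = harm x"
    unfolding harm_def True by (intro sum.cong) (auto simp: power2_eq_square divide_inverse)
  then show ?thesis
    using True by simp
next
  case False
  have "(\<Sum>j\<in>{1..1::nat}. 1 / (real j)^2) \<le> (\<Sum>j=1..z. 1 / (real j)^2)"
    using False by (intro sum_mono2) auto
  then have "harm z + 1 \<le> (\<Sum>j=1..z. (1 + real j) / (real j)^2)"
    using sum_succ_over_square[of z] by simp
  moreover have "real x / (real z + real x) \<le> 1"
    using False by (simp add: divide_le_eq_1)
  ultimately show ?thesis
    using harm_shift_le[of z x] False by linarith
qed

lemma ln_less_of_less_power:
  fixes c t :: real
  assumes "0 < c" "c < (1 + t) ^ k" "0 \<le> t"
  shows "ln c < real k * t"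
proof -
  have "(1 + t) ^ k \<le> exp t ^ k"
    using assms(3) by (intro power_mono exp_ge_add_one_self) simp
  then have "c < exp (real k * t)"
    using assms(2) by (simp add: exp_of_nat_mult)
  then have "ln c < ln (exp (real k * t))"
    using assms(1) by (subst ln_less_cancel_iff) auto
  then show ?thesis
    by simp
qed

lemma ln_Suc_less_3:
  assumes "n \<le> 6"
  shows "ln (real n + 1) < 3"
proof -
  have "ln (real n + 1) \<le> ln 7"
    using assms by (subst ln_le_cancel_iff) auto
  also have "ln 7 < real (4::nat) * (3/4::real)"
    by (rule ln_less_of_less_power) (simp_all add: power_divide)
  finally show ?thesis
    by simp
qed

lemma inv_sq_dist_sum_gt_if_first_max:
  assumes "x + y + z = n" "y \<le> x" "z \<le> x" "n \<ge> 6"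
  shows "2 * ln (real n + 1) < inv_sq_dist_sum n (int x, int y, int z)"
proof -
  have "5/4 \<le> (\<Sum>j=1..x. 1 / (real j)^2)"
  proof -
    have "(\<Sum>j\<in>{1..2::nat}. 1 / (real j)^2) \<le> (\<Sum>j=1..x. 1 / (real j)^2)"
      using assms by (intro sum_mono2) auto
    then show ?thesis
      by (simp add: numeral_2_eq_2)
  qed
  then have "harm x + 5/4 + harm y + harm (z + x) \<le> inv_sq_dist_sum n (int x, int y, int z)"
    using inv_sq_dist_sum_ge_four_families[OF assms(1)] harm_le_two_families[of z x]
      sum_succ_over_square[of x] sum_succ_over_square[of y]
      sum_nonneg[of "{1..y}" "\<lambda>j. 1 / (real j)^2"]
    by force
  moreover have "ln (real x + 1) + ln (real y + 1) + ln (real (z + x) + 1) \<le> harm x + harm y + harm (z + x)"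
    using ln_le_harm[of x] ln_le_harm[of y] ln_le_harm[of "z + x"] by linarith
  moreover have "2 * ln (real n + 1) < 5/4 + ln (real x + 1) + ln (real y + 1) + ln (real (z + x) + 1)"
  proof -
    have "real n + 1 \<le> 3 * (real x + 1)" "real n + 1 \<le> (real y + 1) * (real (z + x) + 1)"
      using assms by (auto simp: algebra_simps)
    then have "(real n + 1) * (real n + 1) \<le> (3 * (real x + 1)) * ((real y + 1) * (real (z + x) + 1))"
      by (intro mult_mono) auto
    then have "(real n + 1)^2 \<le> 3 * ((real x + 1) * (real y + 1) * (real (z + x) + 1))"
      by (simp add: power2_eq_square algebra_simps)
    then have "ln ((real n + 1)^2) \<le> ln (3 * ((real x + 1) * (real y + 1) * (real (z + x) + 1)))"
      by (subst ln_le_cancel_iff) auto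
    then have "2 * ln (real n + 1) \<le> ln 3 + (ln (real x + 1) + ln (real y + 1) + ln (real (z + x) + 1))"
      by (simp add: ln_mult ln_realpow del: of_nat_add)
    moreover have "ln 3 < (8::nat) * (5/32::real)"
      by (rule ln_less_of_less_power) (simp_all add: power_divide)
    ultimately show ?thesis
      by simp
  qed
  ultimately show ?thesis
    by linarith
qed

lemma inv_sq_dist_sum_gt:
  assumes "b \<in> octV n" "n \<ge> 6"
  shows "2 * ln (real n + 1) < inv_sq_dist_sum n b"
proof -
  obtain p q r where b: "b = (p, q, r)"
    by (cases b)
  define x y z where "x = nat \<bar>p\<bar>" and "y = nat \<bar>q\<bar>" and "z = nat \<bar>r\<bar>"
  have sum: "x + y + z = n"
    using assms(1) b by (simp add: x_def y_def z_def octV_def nat_add_distrib[symmetric])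
  have "inv_sq_dist_sum n b = inv_sq_dist_sum n (int x, int y, int z)"
    using inv_sq_dist_sum_symmetric(3)[of n p q r] b by (simp add: x_def y_def z_def)
  moreover consider "y \<le> x \<and> z \<le> x" | "x \<le> y \<and> z \<le> y" | "x \<le> z \<and> y \<le> z"
    by linarith
  then have "2 * ln (real n + 1) < inv_sq_dist_sum n (int x, int y, int z)"
  proof cases
    case 1
    then show ?thesis
      using sum assms(2) by (intro inv_sq_dist_sum_gt_if_first_max) auto
  next
    case 2
    then show ?thesis
      using sum assms(2) inv_sq_dist_sum_gt_if_first_max[of y x z n]
        inv_sq_dist_sum_symmetric(1)[of n "int y" "int x" "int z"] by simp
  next
    case 3
    then show ?thesis
      using sum assms(2) inv_sq_dist_sum_gt_if_first_max[of z y x n]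
        inv_sq_dist_sum_symmetric(2)[of n "int z" "int y" "int x"] by simp
  qed
  ultimately show ?thesis
    by simp
qed

definition two_step_nbhd :: "nat \<Rightarrow> vtx \<Rightarrow> vtx set" where
  "two_step_nbhd n u = {b. b \<noteq> u \<and> (\<exists>a. octAdj n u a \<and> octAdj n a b)}"

lemma oct_involution_two_step_nbhd:
  assumes "oct_involution \<sigma>" "b \<in> two_step_nbhd n u"
  shows "\<sigma> b \<in> two_step_nbhd n (\<sigma> u)"
proof -
  obtain a where "b \<noteq> u" "octAdj n u a" "octAdj n a b"
    using assms(2) unfolding two_step_nbhd_def by blast
  then have "\<sigma> b \<noteq> \<sigma> u" "octAdj n (\<sigma> u) (\<sigma> a)" "octAdj n (\<sigma> a) (\<sigma> b)"
    using oct_involutionD[OF assms(1)] by metis+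
  then show ?thesis
    unfolding two_step_nbhd_def by blast
qed

lemma card_two_step_nbhd_oct_involution:
  assumes "oct_involution \<sigma>"
  shows "card (two_step_nbhd n (\<sigma> u)) = card (two_step_nbhd n u)"
proof -
  have sub: "\<sigma> ` two_step_nbhd n v \<subseteq> two_step_nbhd n (\<sigma> v)" for v
    using oct_involution_two_step_nbhd[OF assms] by blast
  then have "\<sigma> ` two_step_nbhd n (\<sigma> u) \<subseteq> two_step_nbhd n u"
    using sub[of "\<sigma> u"] by (simp add: oct_involutionD(1)[OF assms])
  then have "bij_betw \<sigma> (two_step_nbhd n u) (two_step_nbhd n (\<sigma> u))"
    by (intro bij_betw_byWitness[where f' = \<sigma>]) (simp_all add: oct_involutionD(1)[OF assms] sub)
  then show ?thesis
    by (simp add: bij_betw_same_card)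
qed

lemma eq_of_abs_eq_near_far:
  fixes a a' c :: int
  assumes "\<bar>a\<bar> = \<bar>a'\<bar>" "\<bar>a - c\<bar> \<le> 2" "\<bar>a' - c\<bar> \<le> 2" "3 \<le> \<bar>c\<bar>"
  shows "a = a'"
  using assms by arith

lemma two_step_nbhd_in_box:
  assumes "b \<in> two_step_nbhd n u"
  shows "b \<in> octV n" "b \<noteq> u" "\<bar>fst b - fst u\<bar> \<le> 2" "\<bar>fst (snd b) - fst (snd u)\<bar> \<le> 2"
    "\<bar>snd (snd b) - snd (snd u)\<bar> \<le> 2"
  using assms unfolding two_step_nbhd_def octAdj_def by auto

lemma finite_two_step_nbhd: "finite (two_step_nbhd n u)"
  by (rule finite_subset[OF _ finite_octV]) (use two_step_nbhd_in_box(1) in blast)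

lemma card_two_step_nbhd_le_if_first_far:
  assumes "u \<in> octV n" "3 \<le> \<bar>fst u\<bar>"
  shows "card (two_step_nbhd n u) \<le> 24"
proof -
  define B where "B = {b \<in> octV n. \<bar>fst b - fst u\<bar> \<le> 2 \<and> \<bar>fst (snd b) - fst (snd u)\<bar> \<le> 2
                                \<and> \<bar>snd (snd b) - snd (snd u)\<bar> \<le> 2}"
  define f where "f = (\<lambda>b::vtx. (fst (snd b) - fst (snd u), snd (snd b) - snd (snd u)))"
  have inj: "inj_on f B"
  proof (rule inj_onI)
    fix b b' assume b: "b \<in> B" and b': "b' \<in> B" and fb: "f b = f b'"
    obtain b1 b2 b3 c1 c2 c3 where bc: "b = (b1, b2, b3)" "b' = (c1, c2, c3)"
      by (cases b, cases b')
    have "b2 = c2" "b3 = c3"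
      using fb by (simp_all add: f_def bc)
    moreover have "\<bar>b1\<bar> = \<bar>c1\<bar>"
      using b b' \<open>b2 = c2\<close> \<open>b3 = c3\<close> by (simp add: B_def octV_def bc)
    then have "b1 = c1"
      by (rule eq_of_abs_eq_near_far[where c = "fst u"]) (use b b' assms(2) in \<open>simp_all add: B_def bc\<close>)
    ultimately show "b = b'"
      by (simp add: bc)
  qed
  have "u \<in> B"
    using assms(1) by (simp add: B_def)
  have "f ` (B - {u}) \<subseteq> {-2..2} \<times> {-2..2} - {f u}"
  proof (rule image_subsetI)
    fix b assume b: "b \<in> B - {u}"
    then have "f b \<noteq> f u"
      using inj_on_contraD[OF inj] \<open>u \<in> B\<close> by blast
    with b show "f b \<in> {-2..2} \<times> {-2..2} - {f u}"
      by (simp add: B_def f_def abs_le_iff)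
  qed
  then have "card (f ` (B - {u})) \<le> card ({-2..2::int} \<times> {-2..2::int} - {(0, 0)})"
    by (intro card_mono) (simp_all add: f_def)
  moreover have "two_step_nbhd n u \<subseteq> B - {u}"
  proof
    fix b assume "b \<in> two_step_nbhd n u"
    then show "b \<in> B - {u}"
      using two_step_nbhd_in_box[of b n u] by (simp add: B_def)
  qed
  then have "card (two_step_nbhd n u) \<le> card (B - {u})"
    using finite_octV by (intro card_mono) (auto simp: B_def)
  moreover have "card (f ` (B - {u})) = card (B - {u})"
    using inj by (simp add: card_image inj_on_diff)
  ultimately show ?thesis
    by (simp add: card_cartesian_product)
qed

lemma card_two_step_nbhd_le:
  assumes "u \<in> octV n" "n \<ge> 7"
  shows "card (two_step_nbhd n u) \<le> 24"
proof -
  obtain u1 u2 u3 where u: "u = (u1, u2, u3)"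
    by (cases u)
  then have "\<bar>u1\<bar> + \<bar>u2\<bar> + \<bar>u3\<bar> = int n"
    using assms(1) by (simp add: octV_def)
  then consider "3 \<le> \<bar>u1\<bar>" | "3 \<le> \<bar>u2\<bar>" | "3 \<le> \<bar>u3\<bar>"
    using assms(2) by linarith
  then show ?thesis
  proof cases
    case 1
    then show ?thesis
      using card_two_step_nbhd_le_if_first_far[OF assms(1)] u by simp
  next
    case 2
    have "(u2, u1, u3) \<in> octV n"
      using oct_involutionD(2)[OF oct_involutions(4), of u n] assms(1) u by simp
    then show ?thesis
      using card_two_step_nbhd_le_if_first_far[of "(u2, u1, u3)" n] 2 u
        card_two_step_nbhd_oct_involution[OF oct_involutions(4), of n u] by simp
  next
    case 3
    have "(u3, u2, u1) \<in> octV n"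
      using oct_involutionD(2)[OF oct_involutions(5), of u n] assms(1) u by simp
    then show ?thesis
      using card_two_step_nbhd_le_if_first_far[of "(u3, u2, u1)" n] 3 u
        card_two_step_nbhd_oct_involution[OF oct_involutions(5), of n u] by simp
  qed
qed

lemma prob_osw_chooses:
  assumes "b \<in> octV n"
  shows "measure_pmf.prob (osw_pmf n) {f. f b = u} = pmf (choice_pmf n b) u"
proof -
  have "map_pmf (\<lambda>f. f b) (osw_pmf n) = choice_pmf n b"
    unfolding osw_pmf_def using assms by (simp add: Pi_pmf_component finite_octV)
  moreover have "{f. f b = u} = (\<lambda>f. f b) -` {u}"
    by auto
  ultimately show ?thesis
    by (simp add: measure_map_pmf[symmetric] measure_pmf_single)
qed

lemma pmf_choice_pmf:
  assumes "b \<in> octV n" "u \<in> octV n" "u \<noteq> b" "inv_sq_dist_sum n b > 0"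
  shows "pmf (choice_pmf n b) u = 1 / (inv_sq_dist_sum n b * (real (octDist n b u))^2)"
proof -
  define p where "p = (\<lambda>v. if v \<in> octV n \<and> v \<noteq> b then octZ n b / (real (octDist n b v))^2 else 0)"
  have Z: "octZ n b = 1 / inv_sq_dist_sum n b"
    unfolding octZ_def inv_sq_dist_sum_def by (simp add: inverse_eq_divide)
  then have nonneg: "\<And>v. 0 \<le> p v"
    using assms(4) by (simp add: p_def)
  have "(\<Sum>v\<in>octV n - {b}. p v) = octZ n b * inv_sq_dist_sum n b"
    unfolding inv_sq_dist_sum_def p_def by (simp add: sum_distrib_left)
  then have "(\<Sum>v\<in>octV n - {b}. p v) = 1"
    using Z assms(4) by simp
  moreover have "(\<integral>\<^sup>+v. ennreal (p v) \<partial>count_space UNIV) = (\<Sum>v\<in>octV n - {b}. ennreal (p v))"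
    by (rule nn_integral_count_space') (auto simp: finite_octV p_def)
  ultimately have "(\<integral>\<^sup>+v. ennreal (p v) \<partial>count_space UNIV) = 1"
    using nonneg by simp
  moreover have "choice_pmf n b = embed_pmf p"
    by (simp add: choice_pmf_def p_def)
  ultimately have "pmf (choice_pmf n b) u = p u"
    using pmf_embed_pmf[OF nonneg] by simp
  then show ?thesis
    using assms Z by (simp add: p_def)
qed

lemma prob_osw_chooses_far_less:
  assumes "b \<in> octV n" "u \<in> octV n" "octDist n b u \<ge> 2" "n \<ge> 6"
  shows "measure_pmf.prob (osw_pmf n) {f. f b = u} < 1 / (8 * ln (real n + 1))"
proof -
  define S where "S = inv_sq_dist_sum n b"
  have L: "2 * ln (real n + 1) < S" "0 < ln (real n + 1)"
    using inv_sq_dist_sum_gt[OF assms(1,4)] assms(4) by (simp_all add: S_def)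
  then have "0 < S"
    by linarith
  have "u \<noteq> b"
    using assms(3) octDist_refl[of n b] by auto
  then have "measure_pmf.prob (osw_pmf n) {f. f b = u} = 1 / (S * (real (octDist n b u))^2)"
    using prob_osw_chooses[OF assms(1)] pmf_choice_pmf[OF assms(1,2)] \<open>0 < S\<close> by (simp add: S_def)
  also have "\<dots> \<le> 1 / (S * 4)"
  proof (intro frac_le)
    show "S * 4 \<le> S * (real (octDist n b u))^2"
      using assms(3) \<open>0 < S\<close> power_mono[of 2 "real (octDist n b u)" 2] by simp
  qed (use \<open>0 < S\<close> in auto)
  also have "\<dots> < 1 / (8 * ln (real n + 1))"
    using L \<open>0 < S\<close> by (intro divide_strict_left_mono) auto
  finally show ?thesis .
qed

lemma E1_subset_far_choices:
  "E1 n u \<subseteq> (\<Union>b\<in>{b \<in> two_step_nbhd n u. 2 \<le> octDist n b u}. {f. f b = u})"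
  unfolding E1_def two_step_nbhd_def type_w_def by blast

lemma measure_pmf_UN_less:
  assumes "finite B" "card B \<le> N" "0 < N" "0 < \<epsilon>"
    and "\<And>b. b \<in> B \<Longrightarrow> measure_pmf.prob M (A b) < \<epsilon>"
  shows "measure_pmf.prob M (\<Union>b\<in>B. A b) < real N * \<epsilon>"
proof -
  have "measure_pmf.prob M (\<Union>b\<in>B. A b) \<le> (\<Sum>b\<in>B. measure_pmf.prob M (A b))"
    by (rule measure_pmf.finite_measure_subadditive_finite) (simp_all add: assms(1))
  also have "\<dots> < real N * \<epsilon>"
  proof (cases "B = {}")
    case True
    then show ?thesis
      using assms(3,4) by simp
  next
    case False
    then have "(\<Sum>b\<in>B. measure_pmf.prob M (A b)) < real (card B) * \<epsilon>"
      using sum_strict_mono[OF assms(1) False assms(5)] by simp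
    also have "\<dots> \<le> real N * \<epsilon>"
      using assms(2,4) by (intro mult_right_mono) auto
    finally show ?thesis .
  qed
  finally show ?thesis .
qed

theorem lemma5:
  fixes n :: nat and u :: vtx
  assumes "n \<ge> 1" and "u \<in> octV n"
  shows "measure_pmf.prob (osw_pmf n) (E1 n u) < 3 / ln (real n + 1)"
proof (cases "n \<le> 6")
  case True
  then have "1 < 3 / ln (real n + 1)"
    using ln_Suc_less_3 assms(1) by (simp add: divide_simps)
  then show ?thesis
    using measure_pmf.prob_le_1 le_less_trans by blast
next
  case False
  define B where "B = {b \<in> two_step_nbhd n u. 2 \<le> octDist n b u}"
  have sub: "B \<subseteq> two_step_nbhd n u"
    by (simp add: B_def)
  then have fin: "finite B"
    by (rule finite_subset[OF _ finite_two_step_nbhd])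
  have card: "card B \<le> 24"
    using card_mono[OF finite_two_step_nbhd sub] card_two_step_nbhd_le[OF assms(2)] False by simp
  have "measure_pmf.prob (osw_pmf n) (E1 n u) \<le> measure_pmf.prob (osw_pmf n) (\<Union>b\<in>B. {f. f b = u})"
    using E1_subset_far_choices unfolding B_def by (rule measure_pmf.finite_measure_mono) simp
  also have "\<dots> < real 24 * (1 / (8 * ln (real n + 1)))"
    using fin card False two_step_nbhd_in_box(1)[of _ n u] assms(2)
    by (intro measure_pmf_UN_less prob_osw_chooses_far_less) (auto simp: B_def)
  finally show ?thesis
    by simp
qed

end
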